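(* Let $(E,\|\cdot\|)$ be a Banach space, let $X$ be a Radon random vector on a probability space $(\Omega,\mathcal A,\mathbb P)$ with values in $E$ and distribution $P$, let $r\in(0,+\infty)$ with $\int_E\|x\|^r\,dP(x)<+\infty$, and let $n\ge 1$. Let $a=(a_1,\ldots,a_n)\in E^n$ be a local minimum of the $L^r$-distortion function $G_{r,n}^P$ (with respect to the product topology on $E^n$) such that, for every $i\in\{1,\ldots,n\}$, $a_i$ is a non-isolated point of $\operatorname{supp}(P)$. (a) The components $a_1,\ldots,a_n$ are pairwise distinct. Moreover, if $r\ge 1$, then, writing $\Gamma=\{a_1,\ldots,a_n\}$, for every $i\in\{1,\ldots,n\}$ and every Borel set $C\subset E$ with $W_{a_i}(\Gamma)\subset C\subset V_{a_i}(\Gamma)$, one has \[ a_i\in\operatorname{argmin}_{y\in E} G_{r,1}^{P(\cdot\mid C)}(y), \] equivalently $\{a_i\}$ is an $L^r$-optimal $1$-quantizer for $P(\cdot\mid C)$. (b) Let $r\ge 1$. Assume that for every $b\in E$ the norm is Gâteaux differentiable at $b-x$ for $P(dx)$-almost every $x\in E\setminus\{b\}$, and, when $r=1$, that $P(\{a_i\})=0$ for every $i$. Then $\Gamma=\{a_1,\ldots,a_n\}$ is an $L^r$-stationary $n$-quantizer for $P$. If, in addition, $E$ is strictly convex, then $\Gamma$ is admissible for $P$.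
   Context: $\operatorname{supp}(P)$ denotes the (topological) support of $P$. For a nonempty finite set $\Gamma\subset E$ and $x\in E$, $d(x,\Gamma)=\min_{b\in\Gamma}\|x-b\|$. The $L^r$-distortion function of level $n$ for a Borel probability $Q$ on $E$ is $G_{r,n}^Q:E^n\to\mathbb R_+$, $G_{r,n}^Q(a_1,\ldots,a_n)=\int_E\min_{1\le i\le n}\|x-a_i\|^r\,dQ(x)$. For a Borel set $C$ with $P(C)>0$, $P(\cdot\mid C)=P(\cdot\cap C)/P(C)$. An $L^r$-optimal $1$-quantizer for $Q$ is a singleton $\{y\}$ minimizing $G^Q_{r,1}$ over $E$. For a finite $\Gamma\subset E$ and $b\in\Gamma$: the closed Voronoi cell is $V_b(\Gamma)=\{x\in E:\|x-b\|=d(x,\Gamma)\}$ and the open Voronoi cell is $W_b(\Gamma)=\{x\in E:\|x-b\|<d(x,\Gamma\setminus\{b\})\}$. A Voronoi partition induced by $\Gamma$ is a Borel partition $\{C_b(\Gamma):b\in\Gamma\}$ of $E$ with $C_b(\Gamma)\subset V_b(\Gamma)$ for all $b$. $\Gamma$ is admissible for $P$ if $P\big(\bigcup_{b\in\Gamma}W_b(\Gamma)\big)=1$. The norm is Gâteaux differentiable at $x\ne0$ if there is $\nabla\|\cdot\|(x)\in E^*$ with $\lim_{t\to0}(\|x+ty\|-\|x\|)/t=\langle\nabla\|\cdot\|(x),y\rangle$ for all $y\in E$. Assume $r\ge1$, $\int\|x\|^r dP<\infty$, and that for every $b\in E$ the norm is Gâteaux differentiable at $b-x$ for $P(dx)$-a.e.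 $x\in E\setminus\{b\}$. A set $\Gamma\subset E$ with $\operatorname{card}(\Gamma)=n$ (and $P(\Gamma)=0$ if $r=1$) is an $L^r$-stationary $n$-quantizer for $P$ if there exists a Voronoi partition $\{C_b(\Gamma):b\in\Gamma\}$ induced by $\Gamma$ such that, for every $b\in\Gamma$, $P(C_b(\Gamma))>0$ and \[ \mathbb E\big[\mathbf 1_{C_b(\Gamma)\setminus\{b\}}(X)\,\|X-b\|^{r-1}\,\nabla\|\cdot\|(b-X)\big]=0\quad\text{in }E^*, \] the expectation being a Gelfand integral. *)

theory Defs
  imports "HOL-Probability.Probability"
begin

definition radon_prob :: "'a::metric_space measure \<Rightarrow> bool" where
  "radon_prob P \<longleftrightarrow> prob_space P \<and> sets P = sets borel \<and>
     (\<forall>A\<in>sets borel. emeasure P A = (SUP K\<in>{K. compact K \<and> K \<subseteq> A}. emeasure P K))"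

definition supp :: "'a::topological_space measure \<Rightarrow> 'a set" where
  "supp P = {x. \<forall>U. open U \<and> x \<in> U \<longrightarrow> emeasure P U > 0}"

text \<open>L^r distortion function of level n; a point of E^n is a function on {..<n}.\<close>
definition distortion :: "real \<Rightarrow> nat \<Rightarrow> 'a::real_normed_vector measure \<Rightarrow> (nat \<Rightarrow> 'a) \<Rightarrow> real" where
  "distortion r n Q a = (\<integral>x. Min ((\<lambda>i. norm (x - a i) powr r) ` {..<n}) \<partial>Q)"

definition cond_measure :: "'a measure \<Rightarrow> 'a set \<Rightarrow> 'a measure" where
  "cond_measure P C = density P (\<lambda>x. ennreal (indicator C x / measure P C))"

definition voronoi_closed :: "'a::real_normed_vector \<Rightarrow> 'a set \<Rightarrow> 'a set" where
  "voronoi_closed b \<Gamma> = {x. \<forall>c\<in>\<Gamma>. norm (x - b) \<le> norm (x - c)}"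

definition voronoi_open :: "'a::real_normed_vector \<Rightarrow> 'a set \<Rightarrow> 'a set" where
  "voronoi_open b \<Gamma> = {x. \<forall>c\<in>\<Gamma> - {b}. norm (x - b) < norm (x - c)}"

definition voronoi_partition :: "'a::real_normed_vector set \<Rightarrow> ('a \<Rightarrow> 'a set) \<Rightarrow> bool" where
  "voronoi_partition \<Gamma> C \<longleftrightarrow>
     (\<forall>b\<in>\<Gamma>. C b \<in> sets borel \<and> C b \<subseteq> voronoi_closed b \<Gamma>) \<and>
     (\<forall>b\<in>\<Gamma>. \<forall>c\<in>\<Gamma>. b \<noteq> c \<longrightarrow> C b \<inter> C c = {}) \<and>
     (\<Union>b\<in>\<Gamma>. C b) = UNIV"

definition admissible :: "'a::real_normed_vector measure \<Rightarrow> 'a set \<Rightarrow> bool" where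
  "admissible P \<Gamma> \<longleftrightarrow> measure P (\<Union>b\<in>\<Gamma>. voronoi_open b \<Gamma>) = 1"

definition norm_gateaux_deriv :: "'a::real_normed_vector \<Rightarrow> ('a \<Rightarrow> real) \<Rightarrow> bool" where
  "norm_gateaux_deriv x \<phi> \<longleftrightarrow> bounded_linear \<phi> \<and>
     (\<forall>y. ((\<lambda>t. (norm (x + t *\<^sub>R y) - norm x) / t) \<longlongrightarrow> \<phi> y) (at 0))"

definition norm_gateaux_differentiable :: "'a::real_normed_vector \<Rightarrow> bool" where
  "norm_gateaux_differentiable x \<longleftrightarrow> (\<exists>\<phi>. norm_gateaux_deriv x \<phi>)"

definition norm_grad :: "'a::real_normed_vector \<Rightarrow> 'a \<Rightarrow> real" where
  "norm_grad x = (SOME \<phi>. norm_gateaux_deriv x \<phi>)"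

text \<open>L^r-stationary n-quantizer; the Gelfand integral in E* vanishes iff its pairing with
  every y in E vanishes, i.e. every scalar integral (w.r.t. the completion of P) is 0.\<close>
definition stationary_quantizer :: "'a::real_normed_vector measure \<Rightarrow> real \<Rightarrow> nat \<Rightarrow> 'a set \<Rightarrow> bool" where
  "stationary_quantizer P r n \<Gamma> \<longleftrightarrow> finite \<Gamma> \<and> card \<Gamma> = n \<and>
     (r = 1 \<longrightarrow> measure P \<Gamma> = 0) \<and>
     (\<exists>C. voronoi_partition \<Gamma> C \<and>
        (\<forall>b\<in>\<Gamma>. measure P (C b) > 0 \<and>
           (\<forall>y. integrable (completion P)
                   (\<lambda>x. indicator (C b - {b}) x * norm (x - b) powr (r - 1) * norm_grad (b - x) y)
              \<and> (\<integral>x. indicator (C b - {b}) x * norm (x - b) powr (r - 1) * norm_grad (b - x) y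
                   \<partial>completion P) = 0)))"

definition strictly_convex_norm :: "'a::real_normed_vector itself \<Rightarrow> bool" where
  "strictly_convex_norm _ \<longleftrightarrow>
     (\<forall>x y::'a. norm x = 1 \<and> norm y = 1 \<and> x \<noteq> y \<longrightarrow> norm ((1/2) *\<^sub>R (x + y)) < 1)"

end

theory Submission
  imports Defs
begin

(* Moving the centre a_i changes the distortion only through the points of its Voronoi cell C,
   so at a local minimum a_i is a local minimiser of the cell distortion
   y -> integral over C of ||x - y||^r dP, and hence, this function being convex, a global one.
   Centres cannot coincide: one copy could be moved to a nearby support point outside the other
   centres, which strictly decreases the distortion on a neighbourhood of positive mass.
   Differentiating the cell distortion in a direction z under the integral sign (dominated
   convergence, the Gateaux derivative of the norm existing almost everywhere) yields the
   stationarity equations.  In a strictly convex space, comparing these equations for the open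
   cell and for the open cell enlarged by a tie set forces every tie set to be null, which is
   admissibility. *)

section \<open>Inequalities for real powers\<close>

lemma powr_above_tangent:
  fixes r s s0 :: real
  assumes "r \<ge> 1" "s \<ge> 0" "s0 \<ge> 0"
  shows "s0 powr r + r * s0 powr (r - 1) * (s - s0) \<le> s powr r"
proof (cases "s0 = 0 \<or> s = 0")
  case True
  have "s0 powr r = s0 powr (r - 1) * s0"
    using assms by (cases "s0 = 0") (simp_all add: powr_diff)
  then have "s0 powr r + r * s0 powr (r - 1) * (0 - s0) = (1 - r) * s0 powr r"
    by (simp add: algebra_simps)
  also have "\<dots> \<le> 0"
    using assms by (simp add: mult_nonpos_nonneg)
  finally show ?thesis
    using True assms by auto
next
  case False
  then have "s0 > 0" "s > 0" using assms by auto
  have "((\<lambda>x. x powr r) has_field_derivative r * s0 powr (r - 1)) (at s0 within {0<..})"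
    using \<open>s0 > 0\<close> by (auto intro!: derivative_eq_intros)
  from convex_on_imp_above_tangent[OF powr_convex[OF assms(1)] _ _ _ this]
  have "r * s0 powr (r - 1) * (s - s0) \<le> s powr r - s0 powr r"
    using \<open>s0 > 0\<close> \<open>s > 0\<close> by (simp add: interior_open)
  then show ?thesis by simp
qed

lemma convex_on_powr_nonneg:
  fixes r :: real
  assumes "r \<ge> 1"
  shows "convex_on {0..} (\<lambda>s. s powr r)"
proof (rule convex_onI)
  fix t p q :: real
  assume t: "0 < t" "t < 1" and pq: "p \<in> {0..}" "q \<in> {0..}"
  define m where "m = (1 - t) * p + t * q"
  define g where "g = r * m powr (r - 1)"
  have "m \<ge> 0" using t pq unfolding m_def by simp
  have "(1 - t) * (m powr r + g * (p - m)) + t * (m powr r + g * (q - m))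
          \<le> (1 - t) * p powr r + t * q powr r"
    using powr_above_tangent[OF assms _ \<open>m \<ge> 0\<close>, of p] powr_above_tangent[OF assms _ \<open>m \<ge> 0\<close>, of q] pq t
    unfolding g_def by (intro add_mono mult_left_mono) auto
  moreover have "(1 - t) * (m powr r + g * (p - m)) + t * (m powr r + g * (q - m)) = m powr r"
    unfolding m_def by (simp add: algebra_simps)
  ultimately show "((1 - t) *\<^sub>R p + t *\<^sub>R q) powr r \<le> (1 - t) * p powr r + t * q powr r"
    unfolding m_def by simp
qed simp

lemma abs_powr_diff_le:
  fixes r s1 s2 :: real
  assumes "r \<ge> 1" "s1 \<ge> 0" "s2 \<ge> 0"
  shows "\<bar>s1 powr r - s2 powr r\<bar> \<le> r * max s1 s2 powr (r - 1) * \<bar>s1 - s2\<bar>"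
proof -
  have *: "\<bar>p powr r - q powr r\<bar> \<le> r * max p q powr (r - 1) * \<bar>p - q\<bar>"
    if "0 \<le> q" "q \<le> p" for p q :: real
  proof -
    have "p powr r + r * p powr (r - 1) * (q - p) \<le> q powr r"
      using powr_above_tangent[OF assms(1), of q p] that by simp
    moreover have "q powr r \<le> p powr r"
      using that assms(1) by (intro powr_mono2) auto
    ultimately show ?thesis
      using that by (simp add: max_def algebra_simps)
  qed
  show ?thesis
    using *[of s2 s1] *[of s1 s2] assms by (cases "s2 \<le> s1") (auto simp: max.commute abs_minus_commute)
qed

lemma powr_add_le:
  fixes r p q :: real
  assumes "r > 0" "p \<ge> 0" "q \<ge> 0"
  shows "(p + q) powr r \<le> 2 powr r * (p powr r + q powr r)"
proof -
  have "(p + q) powr r \<le> (2 * max p q) powr r"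
    using assms by (intro powr_mono2) auto
  also have "\<dots> = 2 powr r * max p q powr r"
    using assms by (simp add: powr_mult)
  also have "\<dots> \<le> 2 powr r * (p powr r + q powr r)"
    by (simp add: max_def)
  finally show ?thesis .
qed

lemma powr_minus_one_le:
  fixes r s :: real
  assumes "r \<ge> 1" "s \<ge> 0"
  shows "s powr (r - 1) \<le> 1 + s powr r"
proof (cases "s \<le> 1")
  case True
  then have "s powr (r - 1) \<le> 1" using assms by (intro powr_le1) auto
  then show ?thesis by (simp add: add_increasing2)
next
  case False
  then have "s powr (r - 1) \<le> s powr r" using assms by (intro powr_mono) auto
  then show ?thesis by simp
qed

lemma convex_on_norm_diff_powr:
  fixes x :: "'a::real_normed_vector" and r :: real
  assumes "r \<ge> 1"
  shows "convex_on UNIV (\<lambda>y. norm (x - y) powr r)"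
proof (rule convex_onI)
  fix t :: real and u v :: 'a
  assume t: "0 < t" "t < 1"
  have "x - ((1 - t) *\<^sub>R u + t *\<^sub>R v) = (1 - t) *\<^sub>R (x - u) + t *\<^sub>R (x - v)"
    by (simp add: algebra_simps)
  then have "norm (x - ((1 - t) *\<^sub>R u + t *\<^sub>R v)) \<le> (1 - t) * norm (x - u) + t * norm (x - v)"
    using t norm_triangle_ineq[of "(1 - t) *\<^sub>R (x - u)" "t *\<^sub>R (x - v)"] by simp
  then have "norm (x - ((1 - t) *\<^sub>R u + t *\<^sub>R v)) powr r \<le> ((1 - t) * norm (x - u) + t * norm (x - v)) powr r"
    using assms by (intro powr_mono2) auto
  also have "\<dots> \<le> (1 - t) * norm (x - u) powr r + t * norm (x - v) powr r"
    using convex_onD[OF convex_on_powr_nonneg[OF assms], of t "norm (x - u)" "norm (x - v)"] t by simp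
  finally show "norm (x - ((1 - t) *\<^sub>R u + t *\<^sub>R v)) powr r \<le> (1 - t) * norm (x - u) powr r + t * norm (x - v) powr r" .
qed simp

section \<open>Gateaux derivative of the norm\<close>

lemma norm_gateaux_deriv_norm_grad:
  "norm_gateaux_differentiable u \<Longrightarrow> norm_gateaux_deriv u (norm_grad u)"
  unfolding norm_gateaux_differentiable_def norm_grad_def by (metis someI_ex)

lemma norm_gateaux_deriv_self:
  fixes u :: "'a::real_normed_vector"
  assumes "norm_gateaux_deriv u \<phi>"
  shows "\<phi> u = norm u"
proof -
  have "(norm (u + t *\<^sub>R u) - norm u) / t = norm u" if "t \<noteq> 0" "dist t 0 < 1" for t :: real
  proof -
    have "\<bar>1 + t\<bar> = 1 + t" using that by (auto simp: dist_real_def)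
    then have "norm (u + t *\<^sub>R u) = (1 + t) * norm u"
      using norm_scaleR[of "1 + t" u] by (simp add: algebra_simps)
    then show ?thesis using that by (simp add: algebra_simps)
  qed
  then have "\<forall>\<^sub>F t in at (0::real). (norm (u + t *\<^sub>R u) - norm u) / t = norm u"
    unfolding eventually_at by (intro exI[of _ 1]) auto
  then have "((\<lambda>t. (norm (u + t *\<^sub>R u) - norm u) / t) \<longlongrightarrow> norm u) (at 0)"
    by (rule tendsto_eventually)
  moreover have "((\<lambda>t. (norm (u + t *\<^sub>R u) - norm u) / t) \<longlongrightarrow> \<phi> u) (at 0)"
    using assms unfolding norm_gateaux_deriv_def by blast
  ultimately show ?thesis
    by (intro tendsto_unique[of "at (0::real)"]) auto
qed

lemma norm_gateaux_deriv_le_norm: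
  fixes u :: "'a::real_normed_vector"
  assumes "norm_gateaux_deriv u \<phi>"
  shows "\<phi> w \<le> norm w"
proof (rule tendsto_upperbound)
  show "((\<lambda>t. (norm (u + t *\<^sub>R w) - norm u) / t) \<longlongrightarrow> \<phi> w) (at_right 0)"
    using assms unfolding norm_gateaux_deriv_def by (blast intro: filterlim_within_subset)
  show "\<forall>\<^sub>F t in at_right 0. (norm (u + t *\<^sub>R w) - norm u) / t \<le> norm w"
    unfolding eventually_at_right_field
  proof (intro exI[of _ 1] conjI allI impI)
    fix t :: real assume "0 < t" "t < 1"
    then have "norm (u + t *\<^sub>R w) - norm u \<le> t * norm w"
      using norm_triangle_ineq[of u "t *\<^sub>R w"] by simp
    then show "(norm (u + t *\<^sub>R w) - norm u) / t \<le> norm w"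
      using \<open>0 < t\<close> by (simp add: divide_le_eq mult.commute)
  qed simp
qed simp

lemma norm_gateaux_deriv_diff_pos:
  fixes u v :: "'a::real_normed_vector"
  assumes "strictly_convex_norm TYPE('a)" and \<phi>: "norm_gateaux_deriv u \<phi>"
    and "norm u = norm v" "u \<noteq> v" "u \<noteq> 0"
  shows "\<phi> (u - v) > 0"
proof -
  have lin: "linear \<phi>"
    using \<phi> unfolding norm_gateaux_deriv_def by (auto dest: bounded_linear.linear)
  define c where "c = norm u"
  have "c > 0" using \<open>u \<noteq> 0\<close> unfolding c_def by simp
  have "norm ((1/2) *\<^sub>R ((1/c) *\<^sub>R u + (1/c) *\<^sub>R v)) < 1"
    using assms(1,3,4) \<open>c > 0\<close> unfolding strictly_convex_norm_def c_def by auto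
  also have "(1/2) *\<^sub>R ((1/c) *\<^sub>R u + (1/c) *\<^sub>R v) = (1/c) *\<^sub>R ((1/2) *\<^sub>R (u + v))"
    by (simp add: algebra_simps)
  finally have "norm ((1/2) *\<^sub>R (u + v)) < c"
    using \<open>c > 0\<close> by (simp add: divide_less_eq)
  moreover have "\<phi> ((1/2) *\<^sub>R (u + v)) = (1/2) * (c + \<phi> v)"
    using lin norm_gateaux_deriv_self[OF \<phi>] by (simp add: linear_add linear_scale c_def)
  ultimately have "(1/2) * (c + \<phi> v) < c"
    using norm_gateaux_deriv_le_norm[OF \<phi>, of "(1/2) *\<^sub>R (u + v)"] by linarith
  then have "\<phi> v < c" by simp
  then show ?thesis
    using lin norm_gateaux_deriv_self[OF \<phi>] by (simp add: linear_diff c_def)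
qed

lemma norm_powr_gateaux_quotient_tendsto:
  fixes u z :: "'a::real_normed_vector"
  assumes "u \<noteq> 0" and "norm_gateaux_deriv u \<phi>"
  shows "((\<lambda>t. (norm (u + t *\<^sub>R z) powr r - norm u powr r) / t) \<longlongrightarrow> r * norm u powr (r - 1) * \<phi> z) (at 0)"
proof -
  have "DERIV (\<lambda>t. norm (u + t *\<^sub>R z)) 0 :> \<phi> z"
    using assms(2) unfolding norm_gateaux_deriv_def DERIV_def by simp
  from DERIV_fun_powr[OF this, of r] assms(1)
  show ?thesis unfolding DERIV_def by simp
qed

lemma norm_diff_powr_quotient_bound:
  fixes x b z :: "'a::real_normed_vector"
  assumes "r \<ge> 1" "\<bar>t\<bar> \<le> 1"
  shows "\<bar>(norm (x - (b + t *\<^sub>R z)) powr r - norm (x - b) powr r) / (r * t)\<bar>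
           \<le> (norm (x - b) + norm z) powr (r - 1) * norm z"
proof (cases "t = 0")
  case False
  define s1 where "s1 = norm (x - (b + t *\<^sub>R z))"
  define s2 where "s2 = norm (x - b)"
  have "\<bar>s1 - s2\<bar> \<le> norm ((x - (b + t *\<^sub>R z)) - (x - b))"
    unfolding s1_def s2_def by (rule norm_triangle_ineq3)
  then have d: "\<bar>s1 - s2\<bar> \<le> \<bar>t\<bar> * norm z" by simp
  moreover have "\<bar>t\<bar> * norm z \<le> norm z"
    using assms(2) by (simp add: mult_left_le_one_le)
  ultimately have "max s1 s2 \<le> norm (x - b) + norm z"
    unfolding s2_def by auto
  have "\<bar>s1 powr r - s2 powr r\<bar> \<le> r * max s1 s2 powr (r - 1) * \<bar>s1 - s2\<bar>"
    using abs_powr_diff_le[OF assms(1)] by (simp add: s1_def s2_def)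
  also have "\<dots> \<le> r * (norm (x - b) + norm z) powr (r - 1) * (\<bar>t\<bar> * norm z)"
    using \<open>max s1 s2 \<le> norm (x - b) + norm z\<close> d assms(1)
    by (intro mult_mono mult_left_mono powr_mono2) (auto simp: s1_def s2_def le_max_iff_disj)
  finally have fin: "\<bar>s1 powr r - s2 powr r\<bar> \<le> r * (norm (x - b) + norm z) powr (r - 1) * (\<bar>t\<bar> * norm z)" .
  have "\<bar>(s1 powr r - s2 powr r) / (r * t)\<bar> = \<bar>s1 powr r - s2 powr r\<bar> / (r * \<bar>t\<bar>)"
    using assms(1) by (simp add: abs_mult)
  also have "\<dots> \<le> (norm (x - b) + norm z) powr (r - 1) * norm z"
    using fin False assms(1) by (subst pos_divide_le_eq) (auto simp: mult_ac)
  finally show ?thesis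
    unfolding s1_def s2_def .
qed simp

lemma norm_scaleR_powr_quotient_tendsto_zero:
  fixes z :: "'a::real_normed_vector"
  assumes "r > 1"
  shows "((\<lambda>t. norm (t *\<^sub>R z) powr r / (r * t)) \<longlongrightarrow> 0) (at 0)"
proof -
  have eq: "\<bar>norm (t *\<^sub>R z) powr r / (r * t)\<bar> = \<bar>t\<bar> powr (r - 1) * (norm z powr r / r)" for t
  proof (cases "t = 0")
    case False
    have "(\<bar>t\<bar> * norm z) powr r = \<bar>t\<bar> powr (r - 1) * \<bar>t\<bar> * norm z powr r"
      using False by (simp add: powr_mult powr_diff)
    then show ?thesis
      using False assms by (simp add: abs_mult)
  qed simp
  have "((\<lambda>t. \<bar>t\<bar> powr (r - 1)) \<longlongrightarrow> 0) (at (0::real))"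
    using assms by (intro tendsto_zero_powrI[OF tendsto_rabs_zero[OF tendsto_ident_at] tendsto_const]) auto
  then have "((\<lambda>t. \<bar>t\<bar> powr (r - 1) * (norm z powr r / r)) \<longlongrightarrow> 0) (at 0)"
    by (rule tendsto_mult_left_zero)
  then show ?thesis
    unfolding eq[symmetric] by (rule tendsto_rabs_zero_cancel)
qed

lemma norm_diff_powr_quotient_tendsto:
  fixes x b z :: "'a::real_normed_vector"
  assumes "r \<ge> 1" "x \<noteq> b \<Longrightarrow> norm_gateaux_differentiable (b - x)" "x = b \<Longrightarrow> r > 1"
  shows "((\<lambda>t. (norm (x - (b + t *\<^sub>R z)) powr r - norm (x - b) powr r) / (r * t))
           \<longlongrightarrow> norm (x - b) powr (r - 1) * norm_grad (b - x) z) (at 0)"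
proof (cases "x = b")
  case True
  have "((\<lambda>t. (norm (x - (b + t *\<^sub>R z)) powr r - norm (x - b) powr r) / (r * t)) \<longlongrightarrow> 0) (at 0)"
    using norm_scaleR_powr_quotient_tendsto_zero[OF assms(3)[OF True], of z] True assms(1) by simp
  moreover have "norm (x - b) powr (r - 1) * norm_grad (b - x) z = 0"
    using True by simp
  ultimately show ?thesis
    by (simp only:)
next
  case False
  define u where "u = b - x"
  have "u \<noteq> 0" using False unfolding u_def by simp
  have "x - (b + t *\<^sub>R z) = - (u + t *\<^sub>R z)" for t
    unfolding u_def by (simp add: algebra_simps)
  then have "norm (x - (b + t *\<^sub>R z)) = norm (u + t *\<^sub>R z)" for t
    by (metis norm_minus_cancel)
  moreover have "norm (x - b) = norm u"
    unfolding u_def by (rule norm_minus_commute)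
  ultimately have "(\<lambda>t. (norm (x - (b + t *\<^sub>R z)) powr r - norm (x - b) powr r) / (r * t))
      = (\<lambda>t. (norm (u + t *\<^sub>R z) powr r - norm u powr r) / t / r)"
    by (simp add: mult.commute)
  moreover have "((\<lambda>t. (norm (u + t *\<^sub>R z) powr r - norm u powr r) / t / r)
      \<longlongrightarrow> r * norm u powr (r - 1) * norm_grad u z / r) (at 0)"
    using norm_powr_gateaux_quotient_tendsto[OF \<open>u \<noteq> 0\<close> norm_gateaux_deriv_norm_grad]
      assms(1,2) False unfolding u_def by (intro tendsto_divide tendsto_const) auto
  moreover have "r * norm u powr (r - 1) * norm_grad u z / r = norm (x - b) powr (r - 1) * norm_grad (b - x) z"
    using assms(1) by (simp add: u_def norm_minus_commute[of b x])
  ultimately show ?thesis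
    by (simp only:)
qed

section \<open>Voronoi cells\<close>

lemma open_voronoi_open: "finite \<Gamma> \<Longrightarrow> open (voronoi_open b \<Gamma>)"
proof -
  assume "finite \<Gamma>"
  have "voronoi_open b \<Gamma> = (\<Inter>c\<in>\<Gamma> - {b}. {x. norm (x - b) < norm (x - c)})"
    unfolding voronoi_open_def by auto
  then show ?thesis
    using \<open>finite \<Gamma>\<close> by (auto intro!: open_INT open_Collect_less continuous_intros)
qed

lemma closed_voronoi_closed: "closed (voronoi_closed b \<Gamma>)"
proof -
  have "voronoi_closed b \<Gamma> = (\<Inter>c\<in>\<Gamma>. {x. norm (x - b) \<le> norm (x - c)})"
    unfolding voronoi_closed_def by auto
  then show ?thesis
    by (auto intro!: closed_INT closed_Collect_le continuous_intros)
qed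

lemma voronoi_open_subset_closed: "voronoi_open b \<Gamma> \<subseteq> voronoi_closed b \<Gamma>"
  unfolding voronoi_open_def voronoi_closed_def by (auto intro: less_imp_le)

lemma center_in_voronoi_open: "b \<in> voronoi_open b \<Gamma>"
  unfolding voronoi_open_def by auto

lemma ex_voronoi_closed:
  assumes "finite \<Gamma>" "\<Gamma> \<noteq> {}"
  shows "\<exists>b\<in>\<Gamma>. x \<in> voronoi_closed b \<Gamma>"
  using ex_is_arg_min_if_finite[OF assms, of "\<lambda>c. norm (x - c)"]
  unfolding is_arg_min_def voronoi_closed_def by (auto simp: not_less)

lemma voronoi_tie_if_not_in_open_cells:
  assumes "finite \<Gamma>" "\<Gamma> \<noteq> {}" "x \<notin> (\<Union>b\<in>\<Gamma>. voronoi_open b \<Gamma>)"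
  shows "\<exists>b\<in>\<Gamma>. \<exists>c\<in>\<Gamma>. b \<noteq> c \<and> x \<in> voronoi_closed b \<Gamma> \<inter> voronoi_closed c \<Gamma>"
proof -
  obtain b where b: "b \<in> \<Gamma>" "x \<in> voronoi_closed b \<Gamma>"
    using ex_voronoi_closed[OF assms(1,2)] by blast
  then obtain c where c: "c \<in> \<Gamma>" "c \<noteq> b" "norm (x - c) \<le> norm (x - b)"
    using assms(3) unfolding voronoi_open_def by (auto simp: not_less)
  then have "x \<in> voronoi_closed c \<Gamma>"
    using b unfolding voronoi_closed_def by (auto intro: order_trans)
  then show ?thesis
    using b c by blast
qed

lemma voronoi_open_Int_closed:
  assumes "b \<in> \<Gamma>" "c \<in> \<Gamma>" "c \<noteq> b"
  shows "voronoi_open b \<Gamma> \<inter> voronoi_closed c \<Gamma> = {}"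
  using assms unfolding voronoi_open_def voronoi_closed_def by (force simp: not_le[symmetric])

lemma ex_voronoi_partition:
  fixes \<Gamma> :: "'a::real_normed_vector set"
  assumes "finite \<Gamma>" "\<Gamma> \<noteq> {}"
  shows "\<exists>C. voronoi_partition \<Gamma> C \<and> (\<forall>b\<in>\<Gamma>. voronoi_open b \<Gamma> \<subseteq> C b)"
proof -
  obtain f :: "'a \<Rightarrow> nat" where f: "inj_on f \<Gamma>"
    using finite_imp_inj_to_nat_seg[OF assms(1)] by blast
  \<comment> \<open>Ties are broken in favour of the centre of least rank \<open>f\<close>.\<close>
  define C where "C b = voronoi_closed b \<Gamma> - (\<Union>c\<in>{c\<in>\<Gamma>. f c < f b}. voronoi_closed c \<Gamma>)" for b
  have "C b \<in> sets borel" for b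
    unfolding C_def using assms(1)
    by (intro sets.Diff sets.finite_UN) (auto intro: borel_closed closed_voronoi_closed)
  moreover have "C b \<subseteq> voronoi_closed b \<Gamma>" for b
    unfolding C_def by auto
  moreover have "C b \<inter> C c = {}" if "b \<in> \<Gamma>" "c \<in> \<Gamma>" "b \<noteq> c" for b c
  proof -
    have "f b \<noteq> f c"
      using inj_onD[OF f _ that(1,2)] that(3) by blast
    then show ?thesis
      using that unfolding C_def by (cases "f b < f c") auto
  qed
  moreover have "x \<in> (\<Union>b\<in>\<Gamma>. C b)" for x
  proof -
    obtain b where "is_arg_min f (\<lambda>b. b \<in> {b\<in>\<Gamma>. x \<in> voronoi_closed b \<Gamma>}) b"
      using ex_is_arg_min_if_finite[of "{b\<in>\<Gamma>. x \<in> voronoi_closed b \<Gamma>}" f] ex_voronoi_closed[OF assms] assms(1)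
      by auto
    then show ?thesis
      unfolding is_arg_min_def C_def by auto
  qed
  moreover have "voronoi_open b \<Gamma> \<subseteq> C b" if "b \<in> \<Gamma>" for b
    using that voronoi_open_subset_closed voronoi_open_Int_closed unfolding C_def by blast
  ultimately show ?thesis
    unfolding voronoi_partition_def by (intro exI[of _ C]) auto
qed

lemma Min_norm_powr_eq_nearest:
  fixes a :: "nat \<Rightarrow> 'a::real_normed_vector"
  assumes "i < n" "x \<in> voronoi_closed (a i) (a ` {..<n})" "r \<ge> 0"
  shows "Min ((\<lambda>k. norm (x - a k) powr r) ` {..<n}) = norm (x - a i) powr r"
proof (rule antisym)
  show "Min ((\<lambda>k. norm (x - a k) powr r) ` {..<n}) \<le> norm (x - a i) powr r"
    using assms(1) by (intro Min_le) auto
  show "norm (x - a i) powr r \<le> Min ((\<lambda>k. norm (x - a k) powr r) ` {..<n})"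
    using assms unfolding voronoi_closed_def by (auto intro!: Min.boundedI powr_mono2)
qed

lemma Min_norm_powr_fun_upd_le:
  fixes a :: "nat \<Rightarrow> 'a::real_normed_vector"
  assumes "k < n" "k \<noteq> j" "norm (x - a k) \<le> norm (x - a j)" "r \<ge> 0"
  shows "Min ((\<lambda>i. norm (x - (a(j := y)) i) powr r) ` {..<n}) \<le> Min ((\<lambda>i. norm (x - a i) powr r) ` {..<n})"
proof -
  obtain m where m: "m < n" "Min ((\<lambda>i. norm (x - a i) powr r) ` {..<n}) = norm (x - a m) powr r"
    using Min_in[of "(\<lambda>i. norm (x - a i) powr r) ` {..<n}"] assms(1) by fastforce
  define l where "l = (if m = j then k else m)"
  have "l < n" "(a(j := y)) l = a l"
    using assms(1,2) m(1) unfolding l_def by auto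
  then have "Min ((\<lambda>i. norm (x - (a(j := y)) i) powr r) ` {..<n}) \<le> norm (x - a l) powr r"
    by (metis (mono_tags, lifting) Min_le finite_imageI finite_lessThan image_eqI lessThan_iff)
  also have "\<dots> \<le> norm (x - a m) powr r"
    using assms(3,4) unfolding l_def by (auto intro: powr_mono2)
  finally show ?thesis
    using m(2) by simp
qed

lemma Min_norm_powr_fun_upd_le_split:
  fixes a :: "nat \<Rightarrow> 'a::real_normed_vector"
  assumes "i < n" "voronoi_open (a i) (a ` {..<n}) \<subseteq> C" "r \<ge> 0"
  shows "Min ((\<lambda>k. norm (x - (a(i := y)) k) powr r) ` {..<n})
           \<le> indicator C x * norm (x - y) powr r + indicator (- C) x * Min ((\<lambda>k. norm (x - a k) powr r) ` {..<n})"
proof (cases "x \<in> C")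
  case True
  have "Min ((\<lambda>k. norm (x - (a(i := y)) k) powr r) ` {..<n}) \<le> norm (x - y) powr r"
    using assms(1) by (intro Min_le) (auto intro: image_eqI[where x=i])
  then show ?thesis
    using True by simp
next
  case False
  then have "x \<notin> voronoi_open (a i) (a ` {..<n})"
    using assms(2) by blast
  then obtain k where "k < n" "k \<noteq> i" "norm (x - a k) \<le> norm (x - a i)"
    unfolding voronoi_open_def by (auto simp: not_less)
  from Min_norm_powr_fun_upd_le[OF this assms(3)] False show ?thesis
    by simp
qed

section \<open>Probability measures with finite moment of order r\<close>

definition stationary_cell :: "'a::real_normed_vector measure \<Rightarrow> real \<Rightarrow> 'a set \<Rightarrow> 'a \<Rightarrow> bool" where
  "stationary_cell P r C b \<longleftrightarrow> (\<forall>y.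
     integrable (completion P) (\<lambda>x. indicator (C - {b}) x * norm (x - b) powr (r - 1) * norm_grad (b - x) y) \<and>
     (\<integral>x. indicator (C - {b}) x * norm (x - b) powr (r - 1) * norm_grad (b - x) y \<partial>completion P) = 0)"

lemma borel_measurable_completion_AE_eq:
  assumes "f \<in> borel_measurable M" "AE x in M. f x = g x"
  shows "g \<in> borel_measurable (completion M)"
proof (rule borel_measurableI)
  fix S :: "'b set" assume "open S"
  then have f_sets: "f -` S \<inter> space (completion M) \<in> sets (completion M)"
    using measurable_sets[OF assms(1)] by simp
  have "AE x in completion M. x \<in> f -` S \<inter> space (completion M) \<longleftrightarrow> x \<in> g -` S \<inter> space (completion M)"
    using AE_completion[OF assms(2)] by eventually_elim auto
  from completion.in_sets_AE[OF this f_sets]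
  show "g -` S \<inter> space (completion M) \<in> sets (completion M)"
    by simp
qed

lemma borel_measurable_completion_AE_LIMSEQ:
  fixes g :: "'a \<Rightarrow> 'b::{banach, second_countable_topology}"
  assumes "\<And>k. f k \<in> borel_measurable M" "AE x in M. (\<lambda>k. f k x) \<longlonglongrightarrow> g x"
  shows "g \<in> borel_measurable (completion M)"
proof (rule borel_measurable_completion_AE_eq)
  show "(\<lambda>x. lim (\<lambda>k. f k x)) \<in> borel_measurable M"
    by (rule borel_measurable_lim_metric[OF assms(1)])
  show "AE x in M. lim (\<lambda>k. f k x) = g x"
    using assms(2) by eventually_elim (rule limI)
qed

locale moment_prob_space = prob_space P for P :: "'a::real_normed_vector measure" +
  fixes r :: real
  assumes sets_P: "sets P = sets borel"
    and r_pos: "r > 0"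
    and integrable_norm_powr: "integrable P (\<lambda>x. norm x powr r)"
begin

lemma borel_sets_P: "A \<in> sets borel \<Longrightarrow> A \<in> sets P"
  by (simp add: sets_P)

lemma borel_measurable_norm_diff [measurable]: "(\<lambda>x. norm (x - b)) \<in> borel_measurable P"
  unfolding measurable_cong_sets[OF sets_P refl]
  by (intro borel_measurable_continuous_onI continuous_intros)

lemma integrable_norm_diff_add_powr:
  assumes "K \<ge> 0"
  shows "integrable P (\<lambda>x. (norm (x - b) + K) powr r)"
proof (rule Bochner_Integration.integrable_bound)
  show "integrable P (\<lambda>x. 2 powr r * (norm x powr r + (norm b + K) powr r))"
    using integrable_norm_powr by (intro integrable_mult_right Bochner_Integration.integrable_add) auto
  show "AE x in P. norm ((norm (x - b) + K) powr r) \<le> norm (2 powr r * (norm x powr r + (norm b + K) powr r))"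
  proof (intro AE_I2)
    fix x
    have "(norm (x - b) + K) powr r \<le> (norm x + (norm b + K)) powr r"
      using assms r_pos norm_triangle_ineq4[of x b] by (intro powr_mono2) auto
    also have "\<dots> \<le> 2 powr r * (norm x powr r + (norm b + K) powr r)"
      using assms r_pos by (intro powr_add_le) auto
    finally show "norm ((norm (x - b) + K) powr r) \<le> norm (2 powr r * (norm x powr r + (norm b + K) powr r))"
      by simp
  qed
qed measurable

lemma integrable_norm_diff_powr: "integrable P (\<lambda>x. norm (x - b) powr r)"
  using integrable_norm_diff_add_powr[of 0 b] by simp

lemma integrable_norm_diff_add_powr_minus_one:
  assumes "r \<ge> 1" "K \<ge> 0"
  shows "integrable P (\<lambda>x. (norm (x - b) + K) powr (r - 1))"
proof (rule Bochner_Integration.integrable_bound)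
  show "integrable P (\<lambda>x. 1 + (norm (x - b) + K) powr r)"
    using integrable_norm_diff_add_powr[OF assms(2)] by (intro Bochner_Integration.integrable_add) auto
  have "(norm (x - b) + K) powr (r - 1) \<le> 1 + (norm (x - b) + K) powr r" for x
    using assms by (intro powr_minus_one_le) auto
  then show "AE x in P. norm ((norm (x - b) + K) powr (r - 1)) \<le> norm (1 + (norm (x - b) + K) powr r)"
    by (intro AE_I2) simp
qed measurable

lemma integrable_indicator_norm_diff_powr:
  "C \<in> sets borel \<Longrightarrow> integrable P (\<lambda>x. indicator C x * norm (x - b) powr r)"
  using integrable_real_mult_indicator[OF borel_sets_P integrable_norm_diff_powr]
  by (simp add: mult.commute)

lemma integrable_Min_norm_powr:
  fixes a :: "nat \<Rightarrow> 'a"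
  assumes "n \<ge> 1"
  shows "integrable P (\<lambda>x. Min ((\<lambda>i. norm (x - a i) powr r) ` {..<n}))"
proof (rule Bochner_Integration.integrable_bound[OF integrable_norm_diff_powr[of "a 0"]])
  have "0 \<le> Min ((\<lambda>i. norm (x - a i) powr r) ` {..<n})" "Min ((\<lambda>i. norm (x - a i) powr r) ` {..<n}) \<le> norm (x - a 0) powr r" for x
    using assms by (auto simp: Min_ge_iff lessThan_empty_iff intro: Min_le)
  then show "AE x in P. norm (Min ((\<lambda>i. norm (x - a i) powr r) ` {..<n})) \<le> norm (norm (x - a 0) powr r)"
    by (intro AE_I2) simp
qed measurable

lemma distortion_fun_upd_less:
  assumes "i < n" "j < n" "i \<noteq> j" "a i = a j" "z \<in> supp P" "z \<notin> a ` {..<n}"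
  shows "distortion r n P (a(j := z)) < distortion r n P a"
proof -
  define U where "U = (\<Inter>k<n. {x. norm (x - z) < norm (x - a k)})"
  have "open U" unfolding U_def by (intro open_INT ballI open_Collect_less continuous_intros) auto
  moreover have "z \<in> U" using assms(6) unfolding U_def by auto
  ultimately have "emeasure P U \<noteq> 0"
    using assms(5) unfolding supp_def by fastforce
  have le: "Min ((\<lambda>k. norm (x - (a(j := z)) k) powr r) ` {..<n}) \<le> Min ((\<lambda>k. norm (x - a k) powr r) ` {..<n})" for x
    using assms(1,3,4) r_pos by (intro Min_norm_powr_fun_upd_le) auto
  have less: "Min ((\<lambda>k. norm (x - (a(j := z)) k) powr r) ` {..<n}) < Min ((\<lambda>k. norm (x - a k) powr r) ` {..<n})"
    if "x \<in> U" for x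
  proof -
    have "Min ((\<lambda>k. norm (x - (a(j := z)) k) powr r) ` {..<n}) \<le> norm (x - z) powr r"
      using assms(2) by (intro Min_le) (auto intro: image_eqI[where x=j])
    also have "\<dots> < Min ((\<lambda>k. norm (x - a k) powr r) ` {..<n})"
      using that assms(1) r_pos unfolding U_def by (subst Min_gr_iff) (auto intro: powr_less_mono2)
    finally show ?thesis .
  qed
  have "U \<in> sets P"
    using \<open>open U\<close> by (simp add: sets_P)
  moreover have "AE x in P. x \<in> U \<longrightarrow> Min ((\<lambda>k. norm (x - (a(j := z)) k) powr r) ` {..<n}) \<noteq> Min ((\<lambda>k. norm (x - a k) powr r) ` {..<n})"
    using less by (intro AE_I2) (metis less_irrefl)
  moreover have "n \<ge> 1"
    using assms(1) by simp
  ultimately show ?thesis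
    unfolding distortion_def using le \<open>emeasure P U \<noteq> 0\<close>
    by (intro integral_less_AE[where A=U] integrable_Min_norm_powr) auto
qed

lemma local_min_distortion_inj:
  assumes locmin: "\<exists>e>0. \<forall>c. (\<forall>i<n. dist (c i) (a i) < e) \<longrightarrow> distortion r n P a \<le> distortion r n P c"
    and limpt: "\<forall>i<n. a i islimpt supp P"
  shows "inj_on a {..<n}"
proof (rule ccontr)
  assume "\<not> inj_on a {..<n}"
  then obtain i j where ij: "i < n" "j < n" "i \<noteq> j" "a i = a j"
    unfolding inj_on_def by auto
  obtain e where "e > 0" and e: "\<And>c. \<forall>i<n. dist (c i) (a i) < e \<Longrightarrow> distortion r n P a \<le> distortion r n P c"
    using locmin by auto
  have "a j islimpt ((supp P \<inter> a ` {..<n}) \<union> (supp P - a ` {..<n}))"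
    using limpt ij(2) by (simp add: Int_Diff_Un)
  then have "a j islimpt (supp P - a ` {..<n})"
    by (subst (asm) islimpt_Un_finite) auto
  then obtain z where z: "z \<in> supp P" "z \<notin> a ` {..<n}" "dist z (a j) < e"
    using \<open>e > 0\<close> unfolding islimpt_approachable by blast
  have "distortion r n P a \<le> distortion r n P (a(j := z))"
    using \<open>e > 0\<close> z(3) by (intro e) auto
  then show False
    using distortion_fun_upd_less[OF ij z(1,2)] by simp
qed

definition cell_distortion :: "'a set \<Rightarrow> 'a \<Rightarrow> real" where
  "cell_distortion C y = (\<integral>x. indicator C x * norm (x - y) powr r \<partial>P)"

lemma convex_on_cell_distortion:
  assumes "r \<ge> 1" "C \<in> sets borel"
  shows "convex_on UNIV (cell_distortion C)"
proof (rule convex_onI)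
  fix t :: real and u v :: 'a
  assume t: "0 < t" "t < 1"
  have "indicator C x * norm (x - ((1 - t) *\<^sub>R u + t *\<^sub>R v)) powr r
      \<le> (1 - t) * (indicator C x * norm (x - u) powr r) + t * (indicator C x * norm (x - v) powr r)" for x
    using convex_onD[OF convex_on_norm_diff_powr[OF assms(1)], of t u v x] t
    by (auto simp: indicator_def)
  then have "cell_distortion C ((1 - t) *\<^sub>R u + t *\<^sub>R v)
      \<le> (\<integral>x. (1 - t) * (indicator C x * norm (x - u) powr r) + t * (indicator C x * norm (x - v) powr r) \<partial>P)"
    unfolding cell_distortion_def using assms(2)
    by (intro integral_mono integrable_indicator_norm_diff_powr Bochner_Integration.integrable_add integrable_mult_right)
  also have "\<dots> = (1 - t) * cell_distortion C u + t * cell_distortion C v"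
    unfolding cell_distortion_def using assms(2)
    by (simp add: integrable_indicator_norm_diff_powr)
  finally show "cell_distortion C ((1 - t) *\<^sub>R u + t *\<^sub>R v) \<le> (1 - t) * cell_distortion C u + t * cell_distortion C v" .
qed simp

lemma cell_distortion_le_if_distortion_le:
  fixes a :: "nat \<Rightarrow> 'a"
  assumes "i < n" "C \<in> sets borel"
    and "voronoi_open (a i) (a ` {..<n}) \<subseteq> C" "C \<subseteq> voronoi_closed (a i) (a ` {..<n})"
    and "distortion r n P a \<le> distortion r n P (a(i := y))"
  shows "cell_distortion C (a i) \<le> cell_distortion C y"
proof -
  define M where "M x = Min ((\<lambda>k. norm (x - a k) powr r) ` {..<n})" for x
  define R where "R = (\<integral>x. indicator (- C) x * M x \<partial>P)"
  have "n \<ge> 1"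
    using assms(1) by simp
  have int_R: "integrable P (\<lambda>x. indicator (- C) x * M x)"
    unfolding M_def using integrable_real_mult_indicator[OF _ integrable_Min_norm_powr[OF \<open>n \<ge> 1\<close>]] assms(2)
    by (simp add: sets_P mult.commute)
  have "M x = indicator C x * norm (x - a i) powr r + indicator (- C) x * M x" for x
    using Min_norm_powr_eq_nearest[OF assms(1), where x=x and r=r] assms(4) r_pos
    by (cases "x \<in> C") (auto simp: M_def)
  then have "distortion r n P a = (\<integral>x. indicator C x * norm (x - a i) powr r + indicator (- C) x * M x \<partial>P)"
    unfolding distortion_def M_def[symmetric] by (rule Bochner_Integration.integral_cong[OF refl])
  also have "\<dots> = cell_distortion C (a i) + R"
    unfolding cell_distortion_def R_def using assms(2) int_R
    by (simp add: integrable_indicator_norm_diff_powr)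
  finally have "distortion r n P a = cell_distortion C (a i) + R" .
  moreover have "distortion r n P (a(i := y))
      \<le> (\<integral>x. indicator C x * norm (x - y) powr r + indicator (- C) x * M x \<partial>P)"
    unfolding distortion_def M_def using assms(1,2,3) int_R r_pos \<open>n \<ge> 1\<close>
    by (intro integral_mono Bochner_Integration.integrable_add integrable_indicator_norm_diff_powr
        integrable_Min_norm_powr Min_norm_powr_fun_upd_le_split) (auto simp: M_def)
  moreover have "\<dots> = cell_distortion C y + R"
    unfolding cell_distortion_def R_def using assms(2) int_R
    by (simp add: integrable_indicator_norm_diff_powr)
  ultimately show ?thesis
    using assms(5) by simp
qed

lemma local_min_imp_cell_distortion_min:
  fixes a :: "nat \<Rightarrow> 'a"
  assumes "r \<ge> 1"
    and locmin: "\<exists>e>0. \<forall>c. (\<forall>i<n. dist (c i) (a i) < e) \<longrightarrow> distortion r n P a \<le> distortion r n P c"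
    and "i < n" "C \<in> sets borel"
    and "voronoi_open (a i) (a ` {..<n}) \<subseteq> C" "C \<subseteq> voronoi_closed (a i) (a ` {..<n})"
  shows "cell_distortion C (a i) \<le> cell_distortion C y"
proof -
  obtain e where "e > 0" and e: "\<And>c. \<forall>i<n. dist (c i) (a i) < e \<Longrightarrow> distortion r n P a \<le> distortion r n P c"
    using locmin by auto
  have "\<forall>y'\<in>ball (a i) e. cell_distortion C (a i) \<le> cell_distortion C y'"
    using assms(3-6) \<open>e > 0\<close>
    by (auto intro!: cell_distortion_le_if_distortion_le e simp: dist_commute)
  from convex_local_global_minimum[OF \<open>e > 0\<close> convex_on_cell_distortion[OF assms(1,4)] _ this]
  show ?thesis
    by simp
qed

lemma distortion_cond_measure:
  assumes "C \<in> sets borel"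
  shows "distortion r 1 (cond_measure P C) (\<lambda>_. y) = cell_distortion C y / measure P C"
proof -
  have [measurable]: "C \<in> sets P"
    using assms by (simp add: sets_P)
  have "distortion r 1 (cond_measure P C) (\<lambda>_. y) = (\<integral>x. norm (x - y) powr r \<partial>cond_measure P C)"
    unfolding distortion_def by (simp add: lessThan_Suc)
  also have "\<dots> = (\<integral>x. (indicator C x / measure P C) *\<^sub>R norm (x - y) powr r \<partial>P)"
    unfolding cond_measure_def by (rule integral_density) auto
  also have "\<dots> = cell_distortion C y / measure P C"
    unfolding cell_distortion_def by simp
  finally show ?thesis .
qed

lemma AE_cell_quotient_tendsto:
  assumes "r \<ge> 1"
    and diff: "AE x in P. x \<noteq> b \<longrightarrow> norm_gateaux_differentiable (b - x)"
    and atom: "r = 1 \<Longrightarrow> measure P {b} = 0"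
    and t: "filterlim t (at 0) sequentially"
  shows "AE x in P. (\<lambda>k. indicator C x * ((norm (x - (b + t k *\<^sub>R z)) powr r - norm (x - b) powr r) / (r * t k)))
           \<longlonglongrightarrow> indicator (C - {b}) x * norm (x - b) powr (r - 1) * norm_grad (b - x) z"
proof -
  have "AE x in P. x \<noteq> b \<or> r > 1"
  proof (cases "r = 1")
    case True
    then have "{b} \<in> null_sets P"
      using atom by (simp add: null_sets_def emeasure_eq_measure sets_P)
    from AE_not_in[OF this] show ?thesis
      by eventually_elim simp
  qed (use assms(1) in simp)
  with diff show ?thesis
  proof eventually_elim
    case (elim x)
    have "((\<lambda>s. (norm (x - (b + s *\<^sub>R z)) powr r - norm (x - b) powr r) / (r * s))
        \<longlongrightarrow> norm (x - b) powr (r - 1) * norm_grad (b - x) z) (at 0)"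
      using elim assms(1) by (intro norm_diff_powr_quotient_tendsto) auto
    from tendsto_mult_left[OF filterlim_compose[OF this t]]
    have "(\<lambda>k. indicator C x * ((norm (x - (b + t k *\<^sub>R z)) powr r - norm (x - b) powr r) / (r * t k)))
        \<longlonglongrightarrow> indicator C x * (norm (x - b) powr (r - 1) * norm_grad (b - x) z)"
      by simp
    \<comment> \<open>At the centre the factor \<open>0 powr (r - 1)\<close> vanishes (\<open>0 powr s = 0\<close> in Isabelle),
      so removing the centre from the cell changes nothing.\<close>
    moreover have "indicator C x * (norm (x - b) powr (r - 1) * norm_grad (b - x) z)
        = indicator (C - {b}) x * norm (x - b) powr (r - 1) * norm_grad (b - x) z"
      by (cases "x = b") (simp_all add: indicator_def)
    ultimately show ?case
      by simp
  qed
qed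

lemma cell_distortion_quotient_tendsto:
  assumes "r \<ge> 1" "C \<in> sets borel"
    and diff: "AE x in P. x \<noteq> b \<longrightarrow> norm_gateaux_differentiable (b - x)"
    and atom: "r = 1 \<Longrightarrow> measure P {b} = 0"
    and t: "filterlim t (at 0) sequentially" "\<And>k. \<bar>t k\<bar> \<le> 1"
  shows "integrable (completion P) (\<lambda>x. indicator (C - {b}) x * norm (x - b) powr (r - 1) * norm_grad (b - x) z)"
    and "(\<lambda>k. (cell_distortion C (b + t k *\<^sub>R z) - cell_distortion C b) / (r * t k))
           \<longlonglongrightarrow> integral\<^sup>L (completion P) (\<lambda>x. indicator (C - {b}) x * norm (x - b) powr (r - 1) * norm_grad (b - x) z)"
proof -
  let ?F = "\<lambda>x. indicator (C - {b}) x * norm (x - b) powr (r - 1) * norm_grad (b - x) z"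
  define q where "q k x = indicator C x * ((norm (x - (b + t k *\<^sub>R z)) powr r - norm (x - b) powr r) / (r * t k))" for k x
  define w where "w x = (norm (x - b) + norm z) powr (r - 1) * norm z" for x
  have [measurable]: "C \<in> sets P"
    using assms(2) by (simp add: sets_P)
  have q_meas: "q k \<in> borel_measurable P" for k
    unfolding q_def by measurable
  have lim: "AE x in P. (\<lambda>k. q k x) \<longlonglongrightarrow> ?F x"
    unfolding q_def by (rule AE_cell_quotient_tendsto[OF assms(1) diff atom t(1)])
  have "integrable P w"
    unfolding w_def by (intro integrable_mult_left integrable_norm_diff_add_powr_minus_one assms(1)) simp
  then have w: "integrable (completion P) w"
    by (simp add: integrable_completion)
  have bound: "AE x in completion P. norm (q k x) \<le> w x" for k
  proof (intro AE_I2)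
    fix x
    have "\<bar>q k x\<bar> \<le> \<bar>(norm (x - (b + t k *\<^sub>R z)) powr r - norm (x - b) powr r) / (r * t k)\<bar>"
      unfolding q_def by (simp add: abs_mult indicator_def)
    also have "\<dots> \<le> w x"
      unfolding w_def using assms(1) t(2) by (rule norm_diff_powr_quotient_bound)
    finally show "norm (q k x) \<le> w x"
      by simp
  qed
  \<comment> \<open>Through the choice in \<open>norm_grad\<close> the limit need not be Borel measurable; as an
    almost-everywhere limit it is measurable for the completion, which is why the completion appears.\<close>
  have F_meas: "?F \<in> borel_measurable (completion P)"
    by (rule borel_measurable_completion_AE_LIMSEQ[OF q_meas lim])
  have "integral\<^sup>L (completion P) (q k) = (cell_distortion C (b + t k *\<^sub>R z) - cell_distortion C b) / (r * t k)" for k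
  proof -
    have "q k = (\<lambda>x. (indicator C x * norm (x - (b + t k *\<^sub>R z)) powr r - indicator C x * norm (x - b) powr r) / (r * t k))"
      unfolding q_def by (simp add: right_diff_distrib)
    then show ?thesis
      unfolding integral_completion[OF q_meas] cell_distortion_def using assms(2)
      by (simp add: integrable_indicator_norm_diff_powr)
  qed
  moreover note dominated = F_meas measurable_completion[OF q_meas] w AE_completion[OF lim] bound
  ultimately show "(\<lambda>k. (cell_distortion C (b + t k *\<^sub>R z) - cell_distortion C b) / (r * t k))
           \<longlonglongrightarrow> integral\<^sup>L (completion P) ?F"
    using integral_dominated_convergence[OF dominated] by simp
  show "integrable (completion P) ?F"
    by (rule integrable_dominated_convergence[OF dominated])
qed

lemma stationary_cell_if_cell_distortion_min:
  assumes "r \<ge> 1" "C \<in> sets borel"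
    and min: "\<And>y. cell_distortion C b \<le> cell_distortion C y"
    and diff: "AE x in P. x \<noteq> b \<longrightarrow> norm_gateaux_differentiable (b - x)"
    and atom: "r = 1 \<Longrightarrow> measure P {b} = 0"
  shows "stationary_cell P r C b"
  unfolding stationary_cell_def
proof (intro allI conjI)
  fix z
  define t where "t s k = s / real (Suc k)" for s :: real and k
  have t: "filterlim (t s) (at 0) sequentially" "\<bar>t s k\<bar> \<le> 1" if "\<bar>s\<bar> = 1" for s k
  proof -
    have "t s \<longlonglongrightarrow> 0"
      unfolding t_def divide_inverse by (intro tendsto_mult_right_zero LIMSEQ_inverse_real_of_nat)
    then show "filterlim (t s) (at 0) sequentially"
      using that unfolding filterlim_at t_def by auto
    show "\<bar>t s k\<bar> \<le> 1"
      using that unfolding t_def by (simp add: abs_div)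
  qed
  note quotient = cell_distortion_quotient_tendsto[OF assms(1,2) diff atom t, of _ z]
  show "integrable (completion P) (\<lambda>x. indicator (C - {b}) x * norm (x - b) powr (r - 1) * norm_grad (b - x) z)"
    by (rule quotient(1)[of 1]) simp_all
  \<comment> \<open>At a minimum the one-sided difference quotients have opposite signs.\<close>
  have "0 \<le> (\<integral>x. indicator (C - {b}) x * norm (x - b) powr (r - 1) * norm_grad (b - x) z \<partial>completion P)"
    using min assms(1)
    by (intro LIMSEQ_le_const[OF quotient(2)[of 1]]) (auto simp: t_def intro!: divide_nonneg_pos)
  moreover have "(\<integral>x. indicator (C - {b}) x * norm (x - b) powr (r - 1) * norm_grad (b - x) z \<partial>completion P) \<le> 0"
    using min assms(1)
    by (intro LIMSEQ_le_const2[OF quotient(2)[of "-1"]]) (auto simp: t_def intro!: divide_nonneg_neg)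
  ultimately show "(\<integral>x. indicator (C - {b}) x * norm (x - b) powr (r - 1) * norm_grad (b - x) z \<partial>completion P) = 0"
    by simp
qed

lemma AE_not_in_tie_if_stationary:
  assumes sc: "strictly_convex_norm TYPE('a)"
    and diff: "AE x in P. x \<noteq> b \<longrightarrow> norm_gateaux_differentiable (b - x)"
    and "W \<inter> D = {}" "b \<notin> D"
    and tie: "\<And>x. x \<in> D \<Longrightarrow> norm (x - b) = norm (x - c)" and "c \<noteq> b"
    and "stationary_cell P r W b" "stationary_cell P r (W \<union> D) b"
  shows "AE x in P. x \<notin> D"
proof -
  define H where "H E x = indicator (E - {b}) x * norm (x - b) powr (r - 1) * norm_grad (b - x) (b - c)" for E x
  define g where "g x = indicator D x * (norm (x - b) powr (r - 1) * norm_grad (b - x) (b - c))" for x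
  have "g = (\<lambda>x. H (W \<union> D) x - H W x)"
    using assms(3,4) by (auto simp: g_def H_def indicator_def fun_eq_iff)
  \<comment> \<open>Subtracting the two stationarity equations in direction \<open>b - c\<close> leaves an integrand
    that is positive on the tie set.\<close>
  then have g: "integrable (completion P) g" "integral\<^sup>L (completion P) g = 0"
    using assms(7,8) unfolding stationary_cell_def H_def by auto
  have pos: "AE x in completion P. 0 \<le> g x \<and> (x \<in> D \<longrightarrow> 0 < g x)"
    using AE_completion[OF diff]
  proof eventually_elim
    case (elim x)
    show ?case
    proof (cases "x \<in> D")
      case True
      then have "x \<noteq> b"
        using assms(4) by auto
      have "norm_grad (b - x) ((b - x) - (c - x)) > 0"
        using elim tie[OF True] \<open>x \<noteq> b\<close> assms(6)
        by (intro norm_gateaux_deriv_diff_pos[OF sc norm_gateaux_deriv_norm_grad]) (auto simp: norm_minus_commute)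
      then show ?thesis
        using True \<open>x \<noteq> b\<close> by (simp add: g_def)
    qed (simp add: g_def)
  qed
  then have "AE x in completion P. g x = 0"
    using integral_nonneg_eq_0_iff_AE[OF g(1)] g(2) by (auto elim: AE_mp)
  with pos have "AE x in completion P. x \<notin> D"
    by eventually_elim auto
  then show ?thesis
    by (simp add: AE_completion_iff)
qed

lemma AE_not_in_voronoi_tie:
  assumes sc: "strictly_convex_norm TYPE('a)"
    and diff: "AE x in P. x \<noteq> b \<longrightarrow> norm_gateaux_differentiable (b - x)"
    and "finite \<Gamma>" "b \<in> \<Gamma>" "c \<in> \<Gamma>" "c \<noteq> b"
    and stat: "\<And>C. C \<in> sets borel \<Longrightarrow> voronoi_open b \<Gamma> \<subseteq> C \<Longrightarrow> C \<subseteq> voronoi_closed b \<Gamma> \<Longrightarrow>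
                 stationary_cell P r C b"
  shows "AE x in P. x \<notin> voronoi_closed b \<Gamma> \<inter> voronoi_closed c \<Gamma>"
proof (rule AE_not_in_tie_if_stationary[OF sc diff])
  let ?W = "voronoi_open b \<Gamma>" and ?D = "voronoi_closed b \<Gamma> \<inter> voronoi_closed c \<Gamma>"
  show "?W \<inter> ?D = {}"
    using voronoi_open_Int_closed[OF assms(4-6)] by blast
  then show "b \<notin> ?D"
    using center_in_voronoi_open by blast
  show "norm (x - b) = norm (x - c)" if "x \<in> ?D" for x
    using that assms(4,5) unfolding voronoi_closed_def by (auto intro: antisym)
  have "?W \<in> sets borel"
    using open_voronoi_open[OF assms(3)] by simp
  moreover have "?D \<in> sets borel"
    by (intro borel_closed closed_Int closed_voronoi_closed)
  ultimately show "stationary_cell P r ?W b" "stationary_cell P r (?W \<union> ?D) b"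
    using voronoi_open_subset_closed by (auto intro!: stat)
qed (rule assms(6))

lemma admissible_if_stationary_cells:
  assumes sc: "strictly_convex_norm TYPE('a)"
    and diff: "\<forall>b. AE x in P. x \<noteq> b \<longrightarrow> norm_gateaux_differentiable (b - x)"
    and "finite \<Gamma>" "\<Gamma> \<noteq> {}"
    and stat: "\<And>b C. b \<in> \<Gamma> \<Longrightarrow> C \<in> sets borel \<Longrightarrow> voronoi_open b \<Gamma> \<subseteq> C \<Longrightarrow> C \<subseteq> voronoi_closed b \<Gamma> \<Longrightarrow>
                 stationary_cell P r C b"
  shows "admissible P \<Gamma>"
proof -
  define T where "T = {(b, c) \<in> \<Gamma> \<times> \<Gamma>. c \<noteq> b}"
  have "finite T"
    unfolding T_def using assms(3) by (auto intro: finite_subset[of _ "\<Gamma> \<times> \<Gamma>"])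
  have tie: "AE x in P. x \<notin> voronoi_closed b \<Gamma> \<inter> voronoi_closed c \<Gamma>" if "(b, c) \<in> T" for b c
    using that diff assms(3) stat unfolding T_def by (intro AE_not_in_voronoi_tie[OF sc]) auto
  have "AE x in P. \<forall>p\<in>T. x \<notin> voronoi_closed (fst p) \<Gamma> \<inter> voronoi_closed (snd p) \<Gamma>"
    using \<open>finite T\<close>
  proof (rule AE_finite_allI)
    fix p assume "p \<in> T"
    then show "AE x in P. x \<notin> voronoi_closed (fst p) \<Gamma> \<inter> voronoi_closed (snd p) \<Gamma>"
      using tie[of "fst p" "snd p"] by simp
  qed
  then have "AE x in P. x \<in> (\<Union>b\<in>\<Gamma>. voronoi_open b \<Gamma>)"
  proof eventually_elim
    case (elim x)
    show ?case
    proof (rule ccontr)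
      assume "x \<notin> (\<Union>b\<in>\<Gamma>. voronoi_open b \<Gamma>)"
      then obtain b c where "(b, c) \<in> T" "x \<in> voronoi_closed b \<Gamma> \<inter> voronoi_closed c \<Gamma>"
        using voronoi_tie_if_not_in_open_cells[OF assms(3,4)] unfolding T_def by blast
      then show False
        using elim by fastforce
    qed
  qed
  moreover have "(\<Union>b\<in>\<Gamma>. voronoi_open b \<Gamma>) \<in> sets P"
    by (intro borel_sets_P borel_open open_UN ballI open_voronoi_open assms(3))
  ultimately show ?thesis
    unfolding admissible_def by (simp add: prob_eq_1)
qed

lemma stationary_quantizer_if_stationary_cells:
  assumes "finite \<Gamma>" "\<Gamma> \<noteq> {}" "card \<Gamma> = n" "\<Gamma> \<subseteq> supp P" "r = 1 \<longrightarrow> (\<forall>b\<in>\<Gamma>. measure P {b} = 0)"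
    and stat: "\<And>b C. b \<in> \<Gamma> \<Longrightarrow> C \<in> sets borel \<Longrightarrow> voronoi_open b \<Gamma> \<subseteq> C \<Longrightarrow> C \<subseteq> voronoi_closed b \<Gamma> \<Longrightarrow>
                 stationary_cell P r C b"
  shows "stationary_quantizer P r n \<Gamma>"
proof -
  obtain C where C: "voronoi_partition \<Gamma> C" "\<And>b. b \<in> \<Gamma> \<Longrightarrow> voronoi_open b \<Gamma> \<subseteq> C b"
    using ex_voronoi_partition[OF assms(1,2)] by blast
  have "measure P \<Gamma> = 0" if "r = 1"
  proof -
    have "measure P \<Gamma> \<le> (\<Sum>b\<in>\<Gamma>. measure P {b})"
      using measure_UNION_le[of \<Gamma> "\<lambda>b. {b}" P] assms(1) by (simp add: sets_P)
    then show ?thesis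
      using that assms(5) by (simp add: measure_le_0_iff)
  qed
  moreover have "measure P (C b) > 0" if "b \<in> \<Gamma>" for b
  proof -
    have "C b \<in> sets P"
      using C(1) that unfolding voronoi_partition_def by (simp add: sets_P)
    have "0 < emeasure P (voronoi_open b \<Gamma>)"
      using assms(4) that open_voronoi_open[OF assms(1)] center_in_voronoi_open unfolding supp_def by blast
    also have "\<dots> \<le> emeasure P (C b)"
      using C(2)[OF that] \<open>C b \<in> sets P\<close> by (rule emeasure_mono)
    finally show ?thesis
      by (simp add: emeasure_eq_measure)
  qed
  moreover have "stationary_cell P r (C b) b" if "b \<in> \<Gamma>" for b
    using C that unfolding voronoi_partition_def by (auto intro!: stat)
  ultimately show ?thesis
    using assms(1,3) C(1) unfolding stationary_quantizer_def stationary_cell_def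
    by (intro conjI exI[of _ C] ballI) auto
qed

lemma local_min_imp_stationary_cell:
  fixes a :: "nat \<Rightarrow> 'a"
  assumes "r \<ge> 1"
    and locmin: "\<exists>e>0. \<forall>c. (\<forall>i<n. dist (c i) (a i) < e) \<longrightarrow> distortion r n P a \<le> distortion r n P c"
    and diff: "\<forall>b. AE x in P. x \<noteq> b \<longrightarrow> norm_gateaux_differentiable (b - x)"
    and atom: "r = 1 \<longrightarrow> (\<forall>i<n. measure P {a i} = 0)"
    and "b \<in> a ` {..<n}" "C \<in> sets borel"
    and "voronoi_open b (a ` {..<n}) \<subseteq> C" "C \<subseteq> voronoi_closed b (a ` {..<n})"
  shows "stationary_cell P r C b"
proof -
  obtain i where "i < n" "b = a i"
    using assms(5) by blast
  then have "cell_distortion C b \<le> cell_distortion C y" for y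
    using local_min_imp_cell_distortion_min[OF assms(1) locmin] assms(6-8) by blast
  then show ?thesis
    using assms(1,3,4,6) \<open>i < n\<close> \<open>b = a i\<close> by (intro stationary_cell_if_cell_distortion_min) auto
qed

end

theorem theorem2p1:
  fixes P :: "'a::banach measure" and r :: real and n :: nat and a :: "nat \<Rightarrow> 'a"
  assumes radon: "radon_prob P"
    and r_pos: "r > 0"
    and moment: "integrable P (\<lambda>x. norm x powr r)"
    and n_pos: "n \<ge> 1"
    and locmin: "\<exists>e>0. \<forall>c. (\<forall>i<n. dist (c i) (a i) < e) \<longrightarrow>
                   distortion r n P a \<le> distortion r n P c"
    and nonisol: "\<forall>i<n. a i \<in> supp P \<and> a i islimpt supp P"
  shows "(inj_on a {..<n} \<and>
          (r \<ge> 1 \<longrightarrow>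
            (\<forall>i<n. \<forall>C\<in>sets borel.
               voronoi_open (a i) (a ` {..<n}) \<subseteq> C \<and> C \<subseteq> voronoi_closed (a i) (a ` {..<n}) \<longrightarrow>
               (\<forall>y. distortion r 1 (cond_measure P C) (\<lambda>_. a i)
                      \<le> distortion r 1 (cond_measure P C) (\<lambda>_. y)))))
       \<and> (r \<ge> 1 \<longrightarrow>
          (\<forall>b. AE x in P. x \<noteq> b \<longrightarrow> norm_gateaux_differentiable (b - x)) \<longrightarrow>
          (r = 1 \<longrightarrow> (\<forall>i<n. measure P {a i} = 0)) \<longrightarrow>
          stationary_quantizer P r n (a ` {..<n}) \<and>
          (strictly_convex_norm TYPE('a) \<longrightarrow> admissible P (a ` {..<n})))"
proof -
  have "prob_space P" "sets P = sets borel"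
    using radon unfolding radon_prob_def by blast+
  then interpret moment_prob_space P r
    using r_pos moment by (intro moment_prob_space.intro moment_prob_space_axioms.intro)
  let ?\<Gamma> = "a ` {..<n}"
  have inj: "inj_on a {..<n}"
    using nonisol by (intro local_min_distortion_inj[OF locmin]) auto
  have \<Gamma>: "finite ?\<Gamma>" "?\<Gamma> \<noteq> {}" "card ?\<Gamma> = n" "?\<Gamma> \<subseteq> supp P"
    using n_pos nonisol card_image[OF inj] by auto
  show ?thesis
  proof (intro conjI impI allI ballI)
    fix i C y
    assume "r \<ge> 1" "i < n" and C: "C \<in> sets borel"
      and "voronoi_open (a i) ?\<Gamma> \<subseteq> C \<and> C \<subseteq> voronoi_closed (a i) ?\<Gamma>"
    then show "distortion r 1 (cond_measure P C) (\<lambda>_. a i) \<le> distortion r 1 (cond_measure P C) (\<lambda>_. y)"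
      unfolding distortion_cond_measure[OF C]
      by (intro divide_right_mono local_min_imp_cell_distortion_min[OF _ locmin]) auto
  next
    assume r: "r \<ge> 1" and diff: "\<forall>b. AE x in P. x \<noteq> b \<longrightarrow> norm_gateaux_differentiable (b - x)"
      and atom: "r = 1 \<longrightarrow> (\<forall>i<n. measure P {a i} = 0)"
    note stat = local_min_imp_stationary_cell[OF r locmin diff atom]
    show "stationary_quantizer P r n ?\<Gamma>"
      using \<Gamma> atom by (intro stationary_quantizer_if_stationary_cells stat) auto
    show "admissible P ?\<Gamma>" if "strictly_convex_norm TYPE('a)"
      using that \<Gamma> diff by (intro admissible_if_stationary_cells stat) auto
  qed (rule inj)
qed

end
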